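(* Let $\{(\Gamma_t,\theta_t)\}_{t\in[0,\underline t)}$ be a solution of the framed curvature flow with $\theta$-velocity $\upsilon_\theta$, and let $\Sigma$ be its trajectory surface, parametrized by $(u,t)\mapsto\gamma(t,u)$. At points where $\kappa>0$, the mean curvature $H$ and the Gaussian curvature $K$ of $\Sigma$ are $$H=-\psi_2+\chi,\qquad K=-\psi_3^2-\psi_2\chi,$$ where $$\chi:=\frac{\upsilon_\theta}{\kappa}+\frac{\kappa\,\partial_s\psi_3+2\,\partial_s\kappa\,\psi_3}{\kappa^3}\,\psi_1+\frac{\partial_s^2\kappa-\kappa\,\psi_3^2}{\kappa^3}\,\psi_2 .$$
   Context: Let $S^1=\mathbb{R}/2\pi\mathbb{Z}$. A family of closed curves $\Gamma_t\subset\mathbb{R}^3$, $t\in[0,\underline t)$, is given by sufficiently smooth parametrizations $\gamma(t,\cdot):S^1\to\mathbb{R}^3$; $g:=\|\partial_u\gamma\|$, $ds=g\,du$, $\partial_s=g^{-1}\partial_u$. $T,N,B$ denote the Frenet frame, $\kappa$ the curvature and $\tau$ the torsion of $\Gamma_t$. For an angle function $\theta\in\mathcal C^{1,2}([0,\underline t)\times S^1;S^1)$, $\theta_t:=\theta(t,\cdot)$, define the $\theta$-normal $\nu_\theta=\cos\theta\,N+\sin\theta\,B$, the $\theta$-binormal $\beta_\theta=-\sin\theta\,N+\cos\theta\,B=T\times\nu_\theta$, and $\psi_1=\kappa\cos\theta$, $\psi_2=\kappa\sin\theta$, $\psi_3=\tau+\partial_s\theta$. The family solves the framed curvature flow with $\theta$-velocity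 $\upsilon_\theta\in\mathcal C^1([0,\underline t)\times S^1;\mathbb{R})$ if $\partial_t\gamma=\kappa\nu_\theta$ and $\partial_t\theta=\upsilon_\theta$ on $[0,\underline t)\times S^1$ (with given initial data). The trajectory surface is $\Sigma=\bigcup_{t\in[0,\underline t)}\Gamma_t$, parametrized by $\gamma(t,u)$. Its first and second fundamental forms are taken in the coordinates $(u,t)$ with respect to the unit normal $\beta_\theta$; $K=\det\mathrm{I\!I}/\det\mathrm{I}$ and the mean curvature is $H=\mathrm{tr}(\mathrm{I\!I}\,\mathrm{I}^{-1})$ (the sum of the principal curvatures). *)

theory Defs
  imports "HOL-Analysis.Analysis"
begin

text \<open>D is the time interval [0, tb). Time derivatives are taken within D
  (one-sided at t = 0), space derivatives are ordinary derivatives in u.\<close>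

definition time_dom :: "ereal \<Rightarrow> real set" where
  "time_dom tb = {t. 0 \<le> t \<and> ereal t < tb}"

definition Du :: "(real \<times> real \<Rightarrow> 'a::real_normed_vector) \<Rightarrow> real \<times> real \<Rightarrow> 'a" where
  "Du f p = vector_derivative (\<lambda>v. f (fst p, v)) (at (snd p))"

definition Dt :: "real set \<Rightarrow> (real \<times> real \<Rightarrow> 'a::real_normed_vector) \<Rightarrow> real \<times> real \<Rightarrow> 'a" where
  "Dt D f p = vector_derivative (\<lambda>s. f (s, snd p)) (at (fst p) within D)"

fun pderivs :: "bool list \<Rightarrow> real set \<Rightarrow> (real \<times> real \<Rightarrow> 'a::real_normed_vector) \<Rightarrow> real \<times> real \<Rightarrow> 'a" where
  "pderivs [] D f = f"
| "pderivs (b # bs) D f = (if b then Dt D (pderivs bs D f) else Du (pderivs bs D f))"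

definition smooth_strip :: "real set \<Rightarrow> (real \<times> real \<Rightarrow> 'a::real_normed_vector) \<Rightarrow> bool" where
  "smooth_strip D f \<longleftrightarrow>
     (\<forall>bs. continuous_on (D \<times> UNIV) (pderivs bs D f) \<and>
        (\<forall>t\<in>D. \<forall>u. (\<lambda>s. pderivs bs D f (s, u)) differentiable (at t within D) \<and>
                    (\<lambda>v. pderivs bs D f (t, v)) differentiable (at u)))"

definition C12_strip :: "real set \<Rightarrow> (real \<times> real \<Rightarrow> real) \<Rightarrow> bool" where
  "C12_strip D f \<longleftrightarrow>
     continuous_on (D \<times> UNIV) f \<and> continuous_on (D \<times> UNIV) (Dt D f) \<and>
     continuous_on (D \<times> UNIV) (Du f) \<and> continuous_on (D \<times> UNIV) (Du (Du f)) \<and>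
     (\<forall>t\<in>D. \<forall>u. (\<lambda>s. f (s, u)) differentiable (at t within D) \<and>
                 (\<lambda>v. f (t, v)) differentiable (at u) \<and>
                 (\<lambda>v. Du f (t, v)) differentiable (at u))"

definition C1_strip :: "real set \<Rightarrow> (real \<times> real \<Rightarrow> real) \<Rightarrow> bool" where
  "C1_strip D f \<longleftrightarrow>
     continuous_on (D \<times> UNIV) f \<and> continuous_on (D \<times> UNIV) (Dt D f) \<and>
     continuous_on (D \<times> UNIV) (Du f) \<and>
     (\<forall>t\<in>D. \<forall>u. (\<lambda>s. f (s, u)) differentiable (at t within D) \<and>
                 (\<lambda>v. f (t, v)) differentiable (at u))"

definition speed :: "(real \<times> real \<Rightarrow> real^3) \<Rightarrow> real \<times> real \<Rightarrow> real" where
  "speed \<gamma> p = norm (Du \<gamma> p)"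

definition Ds :: "(real \<times> real \<Rightarrow> real^3) \<Rightarrow> (real \<times> real \<Rightarrow> 'a::real_normed_vector) \<Rightarrow> real \<times> real \<Rightarrow> 'a" where
  "Ds \<gamma> f p = (1 / speed \<gamma> p) *\<^sub>R Du f p"

definition tangent :: "(real \<times> real \<Rightarrow> real^3) \<Rightarrow> real \<times> real \<Rightarrow> real^3" where
  "tangent \<gamma> = Ds \<gamma> \<gamma>"

definition curvature :: "(real \<times> real \<Rightarrow> real^3) \<Rightarrow> real \<times> real \<Rightarrow> real" where
  "curvature \<gamma> p = norm (Ds \<gamma> (tangent \<gamma>) p)"

text \<open>Principal normal (set to 0 where the curvature vanishes; only used where kappa > 0
  or multiplied by kappa).\<close>
definition pnormal :: "(real \<times> real \<Rightarrow> real^3) \<Rightarrow> real \<times> real \<Rightarrow> real^3" where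
  "pnormal \<gamma> p = (1 / curvature \<gamma> p) *\<^sub>R Ds \<gamma> (tangent \<gamma>) p"

definition binormal :: "(real \<times> real \<Rightarrow> real^3) \<Rightarrow> real \<times> real \<Rightarrow> real^3" where
  "binormal \<gamma> p = cross3 (tangent \<gamma> p) (pnormal \<gamma> p)"

definition torsion :: "(real \<times> real \<Rightarrow> real^3) \<Rightarrow> real \<times> real \<Rightarrow> real" where
  "torsion \<gamma> p = Ds \<gamma> (pnormal \<gamma>) p \<bullet> binormal \<gamma> p"

definition theta_normal :: "(real \<times> real \<Rightarrow> real^3) \<Rightarrow> (real \<times> real \<Rightarrow> real) \<Rightarrow> real \<times> real \<Rightarrow> real^3" where
  "theta_normal \<gamma> \<theta> p = cos (\<theta> p) *\<^sub>R pnormal \<gamma> p + sin (\<theta> p) *\<^sub>R binormal \<gamma> p"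

definition theta_binormal :: "(real \<times> real \<Rightarrow> real^3) \<Rightarrow> (real \<times> real \<Rightarrow> real) \<Rightarrow> real \<times> real \<Rightarrow> real^3" where
  "theta_binormal \<gamma> \<theta> p = - sin (\<theta> p) *\<^sub>R pnormal \<gamma> p + cos (\<theta> p) *\<^sub>R binormal \<gamma> p"

definition psi1 :: "(real \<times> real \<Rightarrow> real^3) \<Rightarrow> (real \<times> real \<Rightarrow> real) \<Rightarrow> real \<times> real \<Rightarrow> real" where
  "psi1 \<gamma> \<theta> p = curvature \<gamma> p * cos (\<theta> p)"

definition psi2 :: "(real \<times> real \<Rightarrow> real^3) \<Rightarrow> (real \<times> real \<Rightarrow> real) \<Rightarrow> real \<times> real \<Rightarrow> real" where
  "psi2 \<gamma> \<theta> p = curvature \<gamma> p * sin (\<theta> p)"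

definition psi3 :: "(real \<times> real \<Rightarrow> real^3) \<Rightarrow> (real \<times> real \<Rightarrow> real) \<Rightarrow> real \<times> real \<Rightarrow> real" where
  "psi3 \<gamma> \<theta> p = torsion \<gamma> p + Ds \<gamma> \<theta> p"

definition framed_curvature_flow ::
  "ereal \<Rightarrow> (real \<times> real \<Rightarrow> real^3) \<Rightarrow> (real \<times> real \<Rightarrow> real) \<Rightarrow> (real \<times> real \<Rightarrow> real) \<Rightarrow> bool" where
  "framed_curvature_flow tb \<gamma> \<theta> \<upsilon> \<longleftrightarrow>
     (\<forall>t\<in>time_dom tb. \<forall>u.
        Dt (time_dom tb) \<gamma> (t, u) = curvature \<gamma> (t, u) *\<^sub>R theta_normal \<gamma> \<theta> (t, u) \<and>
        Dt (time_dom tb) \<theta> (t, u) = \<upsilon> (t, u))"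

definition fund1 :: "real set \<Rightarrow> (real \<times> real \<Rightarrow> real^3) \<Rightarrow> real \<times> real \<Rightarrow> real^2^2" where
  "fund1 D \<gamma> p =
     (let Xu = Du \<gamma> p; Xt = Dt D \<gamma> p in
      vector [vector [Xu \<bullet> Xu, Xu \<bullet> Xt], vector [Xt \<bullet> Xu, Xt \<bullet> Xt]])"

definition fund2 :: "real set \<Rightarrow> (real \<times> real \<Rightarrow> real^3) \<Rightarrow> (real \<times> real \<Rightarrow> real) \<Rightarrow> real \<times> real \<Rightarrow> real^2^2" where
  "fund2 D \<gamma> \<theta> p =
     (let n = theta_binormal \<gamma> \<theta> p in
      vector [vector [Du (Du \<gamma>) p \<bullet> n, Dt D (Du \<gamma>) p \<bullet> n],
              vector [Du (Dt D \<gamma>) p \<bullet> n, Dt D (Dt D \<gamma>) p \<bullet> n]])"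

definition gauss_curv :: "real set \<Rightarrow> (real \<times> real \<Rightarrow> real^3) \<Rightarrow> (real \<times> real \<Rightarrow> real) \<Rightarrow> real \<times> real \<Rightarrow> real" where
  "gauss_curv D \<gamma> \<theta> p = det (fund2 D \<gamma> \<theta> p) / det (fund1 D \<gamma> p)"

definition mean_curv :: "real set \<Rightarrow> (real \<times> real \<Rightarrow> real^3) \<Rightarrow> (real \<times> real \<Rightarrow> real) \<Rightarrow> real \<times> real \<Rightarrow> real" where
  "mean_curv D \<gamma> \<theta> p = trace (fund2 D \<gamma> \<theta> p ** matrix_inv (fund1 D \<gamma> p))"

end

theory Submission
  imports Defs
begin

(*
  In the coordinates (u, t) the trajectory surface has gamma_u = g T and gamma_t = kappa nu_theta,
  so its first fundamental form is diag(g^2, kappa^2). The Frenet equations give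
  gamma_uu . beta = -g^2 psi2 and gamma_ut . beta = g kappa psi3. For gamma_tt . beta write
  gamma_t = cos theta W + sin theta (T x W) with W = kappa N the curvature vector; as T x W is
  orthogonal to W and as long, kappa (gamma_tt . beta) = upsilon kappa^2 + kappa B . d_t W.
  Since W is an algebraic function of gamma_u and gamma_uu, whose time derivatives are d_u gamma_t
  and d_u^2 gamma_t, the binormal part of d_t W equals that of d_s^2 (kappa nu_theta), which the
  Frenet equations evaluate to kappa^2 chi - kappa upsilon. H and K are then the trace and
  determinant of two 2x2 matrices. The computation is pointwise.
*)

section \<open>Derivatives and finite smoothness\<close>

definition vderiv :: "(real \<Rightarrow> 'a::real_normed_vector) \<Rightarrow> real \<Rightarrow> 'a" where
  "vderiv f v = vector_derivative f (at v)"

lemma Du_eq_vderiv: "Du f (t, v) = vderiv (\<lambda>w. f (t, w)) v"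
  by (simp add: Du_def vderiv_def)

lemma vderiv_works: "f differentiable at v \<Longrightarrow> (f has_vector_derivative vderiv f v) (at v)"
  unfolding vderiv_def by (rule vector_derivative_works[THEN iffD1])

lemma vderiv_real_works: "(f::real \<Rightarrow> real) differentiable at v \<Longrightarrow> (f has_real_derivative vderiv f v) (at v)"
  unfolding has_real_derivative_iff_has_vector_derivative by (rule vderiv_works)

lemma vderiv_eqI: "(f has_vector_derivative y) (at v) \<Longrightarrow> vderiv f v = y"
  unfolding vderiv_def by (rule vector_derivative_at)

lemma vderiv_real_eqI: "(f has_real_derivative y) (at v) \<Longrightarrow> vderiv f v = y"
  by (rule vderiv_eqI) (simp add: has_real_derivative_iff_has_vector_derivative)

lemma vderiv_cong_open:
  assumes "open S" "\<And>w. w \<in> S \<Longrightarrow> f w = g w" "v \<in> S"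
  shows "vderiv f v = vderiv g v"
proof -
  have "(f has_vector_derivative y) (at v) \<longleftrightarrow> (g has_vector_derivative y) (at v)" for y
    using assms has_vector_derivative_transform_within_open[of f y v S g]
      has_vector_derivative_transform_within_open[of g y v S f] by auto
  then show ?thesis unfolding vderiv_def vector_derivative_def by simp
qed

lemma vderiv_bilinear:
  assumes "bounded_bilinear bb" "f differentiable at v" "g differentiable at v"
  shows "vderiv (\<lambda>v. bb (f v) (g v)) v = bb (f v) (vderiv g v) + bb (vderiv f v) (g v)"
  by (rule vderiv_eqI, rule bounded_bilinear.has_vector_derivative[OF assms(1)])
     (use assms vderiv_works in auto)

text \<open>The n-th derivative is only required to exist, not to be continuous.\<close>

fun Cn_on :: "nat \<Rightarrow> real set \<Rightarrow> (real \<Rightarrow> 'a::real_normed_vector) \<Rightarrow> bool" where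
  "Cn_on 0 S f = True"
| "Cn_on (Suc n) S f = ((\<forall>v\<in>S. f differentiable at v) \<and> Cn_on n S (vderiv f))"

lemma Cn_on_Suc_imp: "Cn_on (Suc n) S f \<Longrightarrow> Cn_on n S f"
  by (induction n arbitrary: f) auto

lemma Cn_on_subset: "S' \<subseteq> S \<Longrightarrow> Cn_on n S f \<Longrightarrow> Cn_on n S' f"
  by (induction n arbitrary: f) auto

lemma Cn_on_cong:
  assumes "open S" "\<And>w. w \<in> S \<Longrightarrow> f w = g w" "Cn_on n S f"
  shows "Cn_on n S g"
  using assms(2,3)
proof (induction n arbitrary: f g)
  case 0
  then show ?case by simp
next
  case (Suc n)
  have "g differentiable at v" if "v \<in> S" for v
  proof -
    have "(f has_vector_derivative vderiv f v) (at v)"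
      using Suc.prems that by (auto intro: vderiv_works)
    then show ?thesis
      using has_vector_derivative_transform_within_open[of f _ v S g] assms(1) that Suc.prems
      by (auto intro: differentiableI_vector)
  qed
  moreover have "Cn_on n S (vderiv g)"
    using Suc.IH[of "vderiv f" "vderiv g"] Suc.prems vderiv_cong_open[OF assms(1)] by auto
  ultimately show ?case by simp
qed

lemma Cn_on_Suc_intro:
  assumes "open S" "\<And>v. v \<in> S \<Longrightarrow> (f has_vector_derivative f' v) (at v)" "Cn_on n S f'"
  shows "Cn_on (Suc n) S f"
  using assms by (auto intro: differentiableI_vector Cn_on_cong[of S f'] vderiv_eqI[symmetric])

lemma Cn_on_const: "Cn_on n S (\<lambda>v. c)"
proof (induction n arbitrary: c)
  case (Suc n)
  have "vderiv (\<lambda>v. c) = (\<lambda>v. 0)" by (auto simp: fun_eq_iff intro!: vderiv_eqI)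
  then show ?case using Suc by simp
qed simp

lemma Cn_on_add:
  assumes "open S"
  shows "Cn_on n S f \<Longrightarrow> Cn_on n S g \<Longrightarrow> Cn_on n S (\<lambda>v. f v + g v)"
proof (induction n arbitrary: f g)
  case (Suc n)
  show ?case
    by (rule Cn_on_Suc_intro[OF assms, where f' = "\<lambda>v. vderiv f v + vderiv g v"])
       (use Suc in \<open>auto intro!: derivative_intros vderiv_works\<close>)
qed simp

lemma Cn_on_uminus:
  assumes "open S"
  shows "Cn_on n S f \<Longrightarrow> Cn_on n S (\<lambda>v. - f v)"
proof (induction n arbitrary: f)
  case (Suc n)
  show ?case
    by (rule Cn_on_Suc_intro[OF assms, where f' = "\<lambda>v. - vderiv f v"])
       (use Suc in \<open>auto intro!: derivative_intros vderiv_works\<close>)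
qed simp

lemma Cn_on_bilinear:
  assumes "bounded_bilinear bb" "open S"
  shows "Cn_on n S f \<Longrightarrow> Cn_on n S g \<Longrightarrow> Cn_on n S (\<lambda>v. bb (f v) (g v))"
proof (induction n arbitrary: f g)
  case (Suc n)
  have "Cn_on n S f" "Cn_on n S g" using Suc.prems Cn_on_Suc_imp by blast+
  then have "Cn_on n S (\<lambda>v. bb (f v) (vderiv g v) + bb (vderiv f v) (g v))"
    using Suc by (intro Cn_on_add[OF assms(2)]) auto
  then show ?case
    by (rule Cn_on_Suc_intro[OF assms(2), rotated])
       (use Suc.prems in \<open>auto intro!: bounded_bilinear.has_vector_derivative[OF assms(1)] vderiv_works\<close>)
qed simp

lemma bounded_bilinear_cross3: "bounded_bilinear cross3"
  using bilinear_conv_bounded_bilinear bilinear_cross by blast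

lemmas Cn_on_scaleR = Cn_on_bilinear[OF bounded_bilinear_scaleR]
lemmas Cn_on_mult = Cn_on_bilinear[OF bounded_bilinear_mult]
lemmas Cn_on_inner = Cn_on_bilinear[OF bounded_bilinear_inner]
lemmas Cn_on_cross3 = Cn_on_bilinear[OF bounded_bilinear_cross3]

lemma Cn_on_inverse:
  fixes f :: "real \<Rightarrow> real"
  assumes "open S"
  shows "Cn_on n S f \<Longrightarrow> (\<And>v. v \<in> S \<Longrightarrow> f v \<noteq> 0) \<Longrightarrow> Cn_on n S (\<lambda>v. inverse (f v))"
proof (induction n)
  case (Suc n)
  have "Cn_on n S (\<lambda>v. - (inverse (f v) * vderiv f v * inverse (f v)))"
    using Suc Cn_on_Suc_imp by (intro Cn_on_uminus[OF assms] Cn_on_mult[OF assms]) auto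
  then show ?case
    by (rule Cn_on_Suc_intro[OF assms, rotated])
       (use Suc.prems in \<open>auto intro!: derivative_eq_intros vderiv_real_works
          simp flip: has_real_derivative_iff_has_vector_derivative\<close>)
qed simp

lemma Cn_on_sqrt:
  fixes f :: "real \<Rightarrow> real"
  assumes "open S"
  shows "Cn_on n S f \<Longrightarrow> (\<And>v. v \<in> S \<Longrightarrow> f v > 0) \<Longrightarrow> Cn_on n S (\<lambda>v. sqrt (f v))"
proof (induction n)
  case (Suc n)
  have "Cn_on n S f" using Suc.prems(1) by (rule Cn_on_Suc_imp)
  moreover have "sqrt (f v) \<noteq> 0" if "v \<in> S" for v
    using Suc.prems(2)[OF that] by simp
  ultimately have "Cn_on n S (\<lambda>v. inverse (sqrt (f v)) * (1 / 2) * vderiv f v)"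
    using Suc by (intro Cn_on_mult[OF assms] Cn_on_inverse[OF assms] Cn_on_const) auto
  then show ?case
  proof (rule Cn_on_Suc_intro[OF assms, rotated])
    fix v assume "v \<in> S"
    then have "0 < f v" "f differentiable at v" using Suc.prems by auto
    from DERIV_chain2[OF DERIV_real_sqrt[OF this(1)] vderiv_real_works[OF this(2)]]
    show "((\<lambda>v. sqrt (f v)) has_vector_derivative inverse (sqrt (f v)) * (1 / 2) * vderiv f v) (at v)"
      by (simp add: has_real_derivative_iff_has_vector_derivative[symmetric] field_simps)
  qed
qed simp

lemma Cn_on_norm:
  fixes f :: "real \<Rightarrow> 'a::real_inner"
  assumes "open S" "Cn_on n S f" "\<And>v. v \<in> S \<Longrightarrow> f v \<noteq> 0"
  shows "Cn_on n S (\<lambda>v. norm (f v))"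
proof -
  have "Cn_on n S (\<lambda>v. sqrt (f v \<bullet> f v))"
    using assms by (intro Cn_on_sqrt Cn_on_inner) auto
  then show ?thesis by (simp add: norm_eq_sqrt_inner)
qed

lemma Cn_on_sin_cos:
  fixes f :: "real \<Rightarrow> real"
  assumes "open S"
  shows "Cn_on n S f \<Longrightarrow> Cn_on n S (\<lambda>v. sin (f v)) \<and> Cn_on n S (\<lambda>v. cos (f v))"
proof (induction n)
  case (Suc n)
  have f: "(f has_real_derivative vderiv f v) (at v)" if "v \<in> S" for v
    using Suc.prems that by (auto intro: vderiv_real_works)
  have "Cn_on n S f" using Suc.prems by (rule Cn_on_Suc_imp)
  then have sin': "Cn_on n S (\<lambda>v. cos (f v) * vderiv f v)"
    and cos': "Cn_on n S (\<lambda>v. - (sin (f v) * vderiv f v))"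
    using Suc by (auto intro!: Cn_on_mult[OF assms] Cn_on_uminus[OF assms])
  show ?case
  proof
    show "Cn_on (Suc n) S (\<lambda>v. sin (f v))"
      by (rule Cn_on_Suc_intro[OF assms _ sin'])
         (auto intro!: derivative_eq_intros f simp flip: has_real_derivative_iff_has_vector_derivative)
    show "Cn_on (Suc n) S (\<lambda>v. cos (f v))"
      by (rule Cn_on_Suc_intro[OF assms _ cos'])
         (auto intro!: derivative_eq_intros f simp flip: has_real_derivative_iff_has_vector_derivative)
  qed
qed simp

lemma has_vector_derivative_const_on_zero:
  assumes "(f has_vector_derivative f') (at t within D)" "\<And>s. s \<in> D \<Longrightarrow> f s = c" "t \<in> D"
    "at t within D \<noteq> bot"
  shows "f' = 0"
proof -
  have "((\<lambda>s. c) has_vector_derivative f') (at t within D)"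
    by (rule has_vector_derivative_transform_within[OF assms(1), where d=1]) (use assms in auto)
  then show ?thesis
    using vector_derivative_unique_within[OF assms(4)] has_vector_derivative_const by metis
qed

section \<open>Vector algebra\<close>

text \<open>For a curve with velocity x and acceleration y, this is the arclength derivative of
  the unit tangent.\<close>

definition curvature_vector :: "'a::real_inner \<Rightarrow> 'a \<Rightarrow> 'a" where
  "curvature_vector x y = (y - ((x \<bullet> y) / (x \<bullet> x)) *\<^sub>R x) /\<^sub>R (x \<bullet> x)"

lemma inner_curvature_vector: "x \<bullet> curvature_vector x y = 0"
  by (cases "x = 0") (simp_all add: curvature_vector_def inner_diff_right)

lemma acceleration_decomposition:
  "x \<noteq> 0 \<Longrightarrow> y = (x \<bullet> x) *\<^sub>R curvature_vector x y + ((x \<bullet> y) / (x \<bullet> x)) *\<^sub>R x"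
  by (simp add: curvature_vector_def)

lemma has_vector_derivative_curvature_vector:
  fixes X Y :: "real \<Rightarrow> 'a::real_inner"
  assumes X: "(X has_vector_derivative X') (at t within D)"
    and Y: "(Y has_vector_derivative Y') (at t within D)" and "X t \<noteq> 0"
  obtains W' where "((\<lambda>s. curvature_vector (X s) (Y s)) has_vector_derivative W') (at t within D)"
    and "\<And>b. b \<bullet> X t = 0 \<Longrightarrow> b \<bullet> Y t = 0 \<Longrightarrow>
           b \<bullet> W' = b \<bullet> ((Y' - ((X t \<bullet> Y t) / (X t \<bullet> X t)) *\<^sub>R X') /\<^sub>R (X t \<bullet> X t))"
proof -
  define a where "a s = inverse (X s \<bullet> X s)" for s
  define c where "c s = (X s \<bullet> Y s) * a s * a s" for s
  have "X differentiable (at t within D)" "Y differentiable (at t within D)"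
    using X Y by (auto intro: differentiableI_vector)
  then have "a differentiable (at t within D)" "c differentiable (at t within D)"
    unfolding a_def[abs_def] c_def[abs_def] using \<open>X t \<noteq> 0\<close>
    by (auto intro!: differentiable_inverse differentiable_mult differentiable_inner)
  then obtain a' c' where a': "(a has_real_derivative a') (at t within D)"
    and c': "(c has_real_derivative c') (at t within D)"
    by (metis has_real_derivative_iff_has_vector_derivative vector_derivative_works)
  have "curvature_vector (X s) (Y s) = a s *\<^sub>R Y s - c s *\<^sub>R X s" for s
    by (simp add: curvature_vector_def a_def c_def divide_inverse algebra_simps)
  then have "((\<lambda>s. curvature_vector (X s) (Y s)) has_vector_derivative
      (a t *\<^sub>R Y' + a' *\<^sub>R Y t) - (c t *\<^sub>R X' + c' *\<^sub>R X t)) (at t within D)"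
    using a' c' X Y by (auto intro!: derivative_intros
        simp: has_real_derivative_iff_has_vector_derivative)
  moreover have "b \<bullet> ((a t *\<^sub>R Y' + a' *\<^sub>R Y t) - (c t *\<^sub>R X' + c' *\<^sub>R X t))
      = b \<bullet> ((Y' - ((X t \<bullet> Y t) / (X t \<bullet> X t)) *\<^sub>R X') /\<^sub>R (X t \<bullet> X t))"
    if "b \<bullet> X t = 0" "b \<bullet> Y t = 0" for b
    using that by (simp add: a_def c_def inner_diff_right inner_add_right field_simps)
  ultimately show ?thesis using that by blast
qed

text \<open>Differentiating a vector rotated in the plane of W and P, where P is orthogonal to W
  and as long, the cross terms cancel because differentiating P \<bullet> W = 0 and
  P \<bullet> P = W \<bullet> W gives P' \<bullet> W = - P \<bullet> W' and P' \<bullet> P = W' \<bullet> W.\<close>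

lemma has_vector_derivative_rotation:
  fixes W P :: "real \<Rightarrow> 'a::real_inner"
  assumes \<phi>: "(\<phi> has_real_derivative \<phi>') (at t within D)"
    and W: "(W has_vector_derivative W') (at t within D)"
    and P: "(P has_vector_derivative P') (at t within D)"
    and orth: "\<And>s. s \<in> D \<Longrightarrow> P s \<bullet> W s = 0"
    and iso: "\<And>s. s \<in> D \<Longrightarrow> P s \<bullet> P s = W s \<bullet> W s"
    and "t \<in> D" "at t within D \<noteq> bot"
  obtains V' where "((\<lambda>s. cos (\<phi> s) *\<^sub>R W s + sin (\<phi> s) *\<^sub>R P s) has_vector_derivative V') (at t within D)"
    and "V' \<bullet> (- sin (\<phi> t) *\<^sub>R W t + cos (\<phi> t) *\<^sub>R P t) = \<phi>' * (W t \<bullet> W t) + P t \<bullet> W'"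
proof -
  have "P t \<bullet> W' + P' \<bullet> W t = 0"
    using bounded_bilinear.has_vector_derivative[OF bounded_bilinear_inner P W]
    by (rule has_vector_derivative_const_on_zero[where c = 0]) (use orth assms(6,7) in auto)
  moreover have "(P t \<bullet> P' + P' \<bullet> P t) - (W t \<bullet> W' + W' \<bullet> W t) = 0"
    using has_vector_derivative_diff[OF
        bounded_bilinear.has_vector_derivative[OF bounded_bilinear_inner P P]
        bounded_bilinear.has_vector_derivative[OF bounded_bilinear_inner W W]]
    by (rule has_vector_derivative_const_on_zero[where c = 0]) (use iso assms(6,7) in auto)
  ultimately have PW': "P' \<bullet> W t = - (P t \<bullet> W')" and PP': "P' \<bullet> P t = W' \<bullet> W t"
    by (simp_all add: inner_commute algebra_simps)
  define V' where "V' = (cos (\<phi> t) *\<^sub>R W' + (- sin (\<phi> t) * \<phi>') *\<^sub>R W t)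
    + (sin (\<phi> t) *\<^sub>R P' + (cos (\<phi> t) * \<phi>') *\<^sub>R P t)"
  have "((\<lambda>s. cos (\<phi> s) *\<^sub>R W s + sin (\<phi> s) *\<^sub>R P s) has_vector_derivative V') (at t within D)"
    unfolding V'_def using \<phi> W P
    by (auto intro!: derivative_eq_intros simp: has_real_derivative_iff_has_vector_derivative)
  moreover have "V' \<bullet> (- sin (\<phi> t) *\<^sub>R W t + cos (\<phi> t) *\<^sub>R P t) = \<phi>' * (W t \<bullet> W t) + P t \<bullet> W'"
  proof -
    define s c where "s = sin (\<phi> t)" and "c = cos (\<phi> t)"
    have "V' \<bullet> (- s *\<^sub>R W t + c *\<^sub>R P t) = (s * s + c * c) * (\<phi>' * (W t \<bullet> W t) + P t \<bullet> W')"
      unfolding V'_def s_def[symmetric] c_def[symmetric] using orth[OF \<open>t \<in> D\<close>] iso[OF \<open>t \<in> D\<close>]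
      by (simp add: inner_add_left inner_add_right PW' PP' inner_commute[of "W t" "P t"]
          inner_commute[of W' "P t"] inner_commute[of W' "W t"] algebra_simps)
    then show ?thesis by (simp add: s_def c_def flip: power2_eq_square)
  qed
  ultimately show ?thesis using that by simp
qed

lemma inner_cross3_unit_orthogonal:
  "a \<bullet> a = 1 \<Longrightarrow> a \<bullet> w = 0 \<Longrightarrow> cross3 a w \<bullet> cross3 a w = w \<bullet> w"
  by (simp add: dot_cross)

lemma orthonormal_cross3_expansion:
  fixes T N y :: "real^3"
  assumes "T \<bullet> T = 1" "N \<bullet> N = 1" "T \<bullet> N = 0"
  shows "y = (y \<bullet> T) *\<^sub>R T + (y \<bullet> N) *\<^sub>R N + (y \<bullet> cross3 T N) *\<^sub>R cross3 T N"
proof -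
  define B where "B = cross3 T N"
  define r where "r = y - ((y \<bullet> T) *\<^sub>R T + (y \<bullet> N) *\<^sub>R N + (y \<bullet> B) *\<^sub>R B)"
  have B: "B \<bullet> T = 0" "B \<bullet> N = 0" "B \<bullet> B = 1" "T \<bullet> B = 0" "N \<bullet> B = 0"
    using assms by (simp_all add: B_def dot_cross_self dot_cross inner_commute)
  have r: "r \<bullet> T = 0" "r \<bullet> N = 0" "r \<bullet> B = 0"
    using assms B by (simp_all add: r_def inner_diff_left inner_add_left inner_commute[of N T])
  have "cross3 B r = 0"
    using r by (simp add: B_def cross_skew[of "cross3 T N"] Lagrange inner_commute)
  then have "r \<bullet> r = 0"
    using dot_cross[of B r B r] B r by (simp add: inner_commute)
  then show ?thesis by (simp add: r_def B_def)
qed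

lemma matrix_inv_unique:
  fixes A B :: "'a::semiring_1^'n^'n"
  assumes "A ** B = mat 1" "B ** A = mat 1"
  shows "matrix_inv A = B"
proof -
  define C where "C = matrix_inv A"
  have C: "A ** C = mat 1 \<and> C ** A = mat 1"
    unfolding C_def matrix_inv_def by (rule someI[of _ B]) (use assms in blast)
  have "C = C ** (A ** B)" using assms by simp
  also have "\<dots> = (C ** A) ** B" by (simp add: matrix_mul_assoc)
  also have "\<dots> = B" using C by simp
  finally show ?thesis unfolding C_def .
qed

lemma
  fixes a b c d p q :: real
  assumes "p \<noteq> 0" "q \<noteq> 0"
  shows trace_mult_matrix_inv_diagonal_2:
      "trace (vector [vector [a, b], vector [c, d]] ** matrix_inv (vector [vector [p, 0], vector [0, q]] :: real^2^2)
         :: real^2^2) = a / p + d / q"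
    and det_divide_det_diagonal_2:
      "det (vector [vector [a, b], vector [c, d]] :: real^2^2) / det (vector [vector [p, 0], vector [0, q]] :: real^2^2)
         = (a * d - b * c) / (p * q)"
proof -
  have inv: "matrix_inv (vector [vector [p, 0], vector [0, q]] :: real^2^2) = vector [vector [1/p, 0], vector [0, 1/q]]"
    by (rule matrix_inv_unique)
       (use assms in \<open>auto simp: matrix_matrix_mult_def mat_def vec_eq_iff forall_2 sum_2 vector_def\<close>)
  show "trace (vector [vector [a, b], vector [c, d]] ** matrix_inv (vector [vector [p, 0], vector [0, q]] :: real^2^2)
      :: real^2^2) = a / p + d / q"
    unfolding inv by (simp add: trace_def matrix_matrix_mult_def sum_2 vector_def UNIV_2)
  show "det (vector [vector [a, b], vector [c, d]] :: real^2^2) / det (vector [vector [p, 0], vector [0, q]] :: real^2^2)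
      = (a * d - b * c) / (p * q)"
    by (simp add: det_2 vector_def)
qed

section \<open>The time strip\<close>

lemma atLeastAtMost_subset_time_dom: "t \<in> time_dom tb \<Longrightarrow> {0..t} \<subseteq> time_dom tb"
  by (auto simp: time_dom_def intro: le_less_trans[of _ "ereal t"])

lemma at_within_time_dom:
  assumes "t \<in> time_dom tb"
  obtains b where "t < b" "{0..b} \<subseteq> time_dom tb" "at t within time_dom tb = at t within {0..b}"
proof -
  from assms have "ereal t < tb" by (simp add: time_dom_def)
  then obtain b where "t < b" "ereal b < tb" using ereal_dense2 by force
  then have sub: "{0..b} \<subseteq> time_dom tb"
    by (auto simp: time_dom_def intro: le_less_trans[of _ "ereal b"])
  have "at t within time_dom tb = at t within {0..b}"
    by (rule at_within_nhd[of _ "{..<b}"]) (use \<open>t < b\<close> sub in \<open>auto simp: time_dom_def\<close>)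
  with \<open>t < b\<close> sub that show ?thesis by blast
qed

lemma at_within_time_dom_nontrivial: "t \<in> time_dom tb \<Longrightarrow> at t within time_dom tb \<noteq> bot"
proof -
  assume t: "t \<in> time_dom tb"
  then obtain b where "t < b" "at t within time_dom tb = at t within {0..b}"
    using at_within_time_dom by metis
  moreover have "0 \<le> t" using t by (simp add: time_dom_def)
  ultimately show ?thesis
    by (cases "t = 0") (auto simp: at_within_Icc_at_right at_within_Icc_at)
qed

lemma Dt_eqI:
  assumes "((\<lambda>s. f (s, u)) has_vector_derivative f') (at t within time_dom tb)" "t \<in> time_dom tb"
  shows "Dt (time_dom tb) f (t, u) = f'"
  using assms at_within_time_dom_nontrivial by (simp add: Dt_def vector_derivative_within)

text \<open>Schwarz's theorem on the strip: writing the u-derivative of F(s, .) as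
  that of F(0, .) plus the integral of the mixed derivative over [0, s] (Leibniz's rule),
  the time derivative is read off by the fundamental theorem of calculus.\<close>

context
  fixes F :: "real \<times> real \<Rightarrow> 'a::banach" and tb :: ereal
  assumes cont: "continuous_on (time_dom tb \<times> UNIV) (Du (Dt (time_dom tb) F))"
    and dt: "\<And>s v. s \<in> time_dom tb \<Longrightarrow>
      ((\<lambda>s. F (s, v)) has_vector_derivative Dt (time_dom tb) F (s, v)) (at s within time_dom tb)"
    and du: "\<And>s v. s \<in> time_dom tb \<Longrightarrow> ((\<lambda>v. F (s, v)) has_vector_derivative Du F (s, v)) (at v)"
    and dudt: "\<And>s v. s \<in> time_dom tb \<Longrightarrow>
      ((\<lambda>v. Dt (time_dom tb) F (s, v)) has_vector_derivative Du (Dt (time_dom tb) F) (s, v)) (at v)"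
begin

lemma Du_eq_integral_Du_Dt:
  assumes s: "s \<in> time_dom tb"
  shows "Du F (s, u) = Du F (0, u) + integral {0..s} (\<lambda>r. Du (Dt (time_dom tb) F) (r, u))"
proof -
  define m where "m = Du (Dt (time_dom tb) F)"
  have "0 \<in> time_dom tb" using s by (auto simp: time_dom_def intro: le_less_trans[of _ "ereal s"])
  have sub: "{0..s} \<subseteq> time_dom tb" using atLeastAtMost_subset_time_dom s by blast
  have s0: "0 \<le> s" using s by (simp add: time_dom_def)
  have ftc: "((\<lambda>r. Dt (time_dom tb) F (r, v)) has_integral (F (s, v) - F (0, v))) {0..s}" for v
    by (rule fundamental_theorem_of_calculus[OF s0])
       (use dt sub in \<open>meson has_vector_derivative_within_subset subsetD\<close>)
  have cm: "continuous_on (UNIV \<times> cbox 0 s) (\<lambda>(x, r). m (r, x))"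
  proof -
    have "continuous_on (UNIV \<times> cbox 0 s) (m \<circ> (\<lambda>(x, r). (r, x)))"
    proof (rule continuous_on_compose)
      show "continuous_on (UNIV \<times> cbox 0 s) (\<lambda>(x, r). (r, x))"
        by (auto intro!: continuous_intros simp: split_beta)
      show "continuous_on ((\<lambda>(x, r). (r, x)) ` (UNIV \<times> cbox 0 s)) m"
        by (rule continuous_on_subset[OF cont[folded m_def]]) (use sub in auto)
    qed
    then show ?thesis by (simp add: o_def split_beta)
  qed
  have leibniz: "((\<lambda>x. integral (cbox 0 s) (\<lambda>r. Dt (time_dom tb) F (r, x))) has_vector_derivative
      integral (cbox 0 s) (\<lambda>r. m (r, x0))) (at x0 within UNIV)" for x0
    apply (rule leibniz_rule_vector_derivative[where fx = "\<lambda>x r. m (r, x)"])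
    using dudt sub ftc cm unfolding m_def by (auto intro: has_integral_integrable[OF ftc])
  have eq: "(\<lambda>v. F (s, v)) = (\<lambda>v. F (0, v) + integral {0..s} (\<lambda>r. Dt (time_dom tb) F (r, v)))"
    using integral_unique[OF ftc] by (simp add: fun_eq_iff)
  have "((\<lambda>v. F (s, v)) has_vector_derivative Du F (0, u) + integral {0..s} (\<lambda>r. m (r, u))) (at u)"
    unfolding eq using du[OF \<open>0 \<in> time_dom tb\<close>] leibniz[of u] by (auto intro!: derivative_intros)
  with du[OF s, of u] show ?thesis
    unfolding m_def using vector_derivative_unique_at by blast
qed

lemma Dt_Du_commute:
  assumes t: "t \<in> time_dom tb"
  shows "Dt (time_dom tb) (Du F) (t, u) = Du (Dt (time_dom tb) F) (t, u)"
proof -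
  define m where "m = Du (Dt (time_dom tb) F)"
  obtain b where b: "t < b" "{0..b} \<subseteq> time_dom tb" "at t within time_dom tb = at t within {0..b}"
    using at_within_time_dom t by metis
  have "0 \<le> t" using t by (simp add: time_dom_def)
  have "continuous_on {0..b} (\<lambda>r. m (r, u))"
    by (rule continuous_on_compose2[OF cont[folded m_def]]) (use b in \<open>auto intro!: continuous_intros\<close>)
  from integral_has_vector_derivative[OF this, of t]
  have "((\<lambda>s. Du F (0, u) + integral {0..s} (\<lambda>r. m (r, u))) has_vector_derivative m (t, u))
      (at t within {0..b})"
    using \<open>0 \<le> t\<close> b by (auto intro!: derivative_eq_intros)
  then have "((\<lambda>s. Du F (0, u) + integral {0..s} (\<lambda>r. m (r, u))) has_vector_derivative m (t, u))
      (at t within time_dom tb)"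
    using b by simp
  then have "((\<lambda>s. Du F (s, u)) has_vector_derivative m (t, u)) (at t within time_dom tb)"
    by (rule has_vector_derivative_transform_within[where d=1])
       (use t Du_eq_integral_Du_Dt in \<open>auto simp: m_def\<close>)
  then show ?thesis using Dt_eqI t unfolding m_def by blast
qed

end

lemma pderivs_append: "pderivs (bs @ cs) D f = pderivs bs D (pderivs cs D f)"
  by (induction bs) auto

lemma smooth_strip_pderivs: "smooth_strip D f \<Longrightarrow> smooth_strip D (pderivs cs D f)"
  unfolding smooth_strip_def by (metis pderivs_append)

lemma smooth_strip_Du: "smooth_strip D f \<Longrightarrow> smooth_strip D (Du f)"
  using smooth_strip_pderivs[of D f "[False]"] by simp

lemma smooth_strip_Dt: "smooth_strip D f \<Longrightarrow> smooth_strip D (Dt D f)"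
  using smooth_strip_pderivs[of D f "[True]"] by simp

lemma smooth_strip_has_Dt:
  "smooth_strip D f \<Longrightarrow> s \<in> D \<Longrightarrow> ((\<lambda>s. f (s, u)) has_vector_derivative Dt D f (s, u)) (at s within D)"
  unfolding smooth_strip_def
  by (metis pderivs.simps(1) Dt_def snd_conv fst_conv vector_derivative_works)

lemma smooth_strip_has_Du:
  "smooth_strip D f \<Longrightarrow> s \<in> D \<Longrightarrow> ((\<lambda>v. f (s, v)) has_vector_derivative Du f (s, v)) (at v)"
  unfolding smooth_strip_def
  by (metis pderivs.simps(1) Du_def snd_conv fst_conv vector_derivative_works)

lemma smooth_strip_Cn_on: "smooth_strip D f \<Longrightarrow> s \<in> D \<Longrightarrow> Cn_on n UNIV (\<lambda>v. f (s, v))"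
proof (induction n arbitrary: f)
  case (Suc n)
  have "vderiv (\<lambda>v. f (s, v)) = (\<lambda>v. Du f (s, v))"
    by (simp add: Du_eq_vderiv fun_eq_iff)
  with Suc smooth_strip_Du[OF Suc.prems(1)] smooth_strip_has_Du[OF Suc.prems]
  show ?case by (auto intro: differentiableI_vector)
qed simp

lemma smooth_strip_Dt_Du_commute:
  fixes F :: "real \<times> real \<Rightarrow> 'a::banach"
  assumes "smooth_strip (time_dom tb) F" "t \<in> time_dom tb"
  shows "Dt (time_dom tb) (Du F) (t, u) = Du (Dt (time_dom tb) F) (t, u)"
proof (rule Dt_Du_commute)
  show "continuous_on (time_dom tb \<times> UNIV) (Du (Dt (time_dom tb) F))"
    using assms(1) unfolding smooth_strip_def by (metis pderivs.simps)
qed (use assms smooth_strip_has_Dt smooth_strip_has_Du smooth_strip_has_Du[OF smooth_strip_Dt] in auto)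

lemma smooth_strip_has_Dt_Du:
  fixes F :: "real \<times> real \<Rightarrow> 'a::banach"
  assumes "smooth_strip (time_dom tb) F" "t \<in> time_dom tb"
  shows "((\<lambda>s. Du F (s, u)) has_vector_derivative Du (Dt (time_dom tb) F) (t, u)) (at t within time_dom tb)"
  using smooth_strip_has_Dt[OF smooth_strip_Du[OF assms(1)] assms(2)]
  by (simp add: smooth_strip_Dt_Du_commute[OF assms])

lemma smooth_strip_has_Dt_Du_Du:
  fixes F :: "real \<times> real \<Rightarrow> 'a::banach"
  assumes "smooth_strip (time_dom tb) F" "t \<in> time_dom tb"
  shows "((\<lambda>s. Du (Du F) (s, u)) has_vector_derivative Du (Du (Dt (time_dom tb) F)) (t, u))
    (at t within time_dom tb)"
proof -
  have eq: "Du (Dt (time_dom tb) (Du F)) (t, u) = Du (Du (Dt (time_dom tb) F)) (t, u)"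
    using smooth_strip_Dt_Du_commute[OF assms] by (simp add: Du_eq_vderiv)
  show ?thesis
    using smooth_strip_has_Dt_Du[OF smooth_strip_Du[OF assms(1)] assms(2), of u] unfolding eq .
qed

lemma C12_strip_Cn_on:
  assumes "C12_strip D f" "s \<in> D"
  shows "Cn_on 2 UNIV (\<lambda>v. f (s, v))"
proof -
  have "vderiv (\<lambda>v. f (s, v)) = (\<lambda>v. Du f (s, v))"
    by (simp add: Du_eq_vderiv fun_eq_iff)
  then show ?thesis
    using assms by (simp add: C12_strip_def numeral_2_eq_2)
qed

section \<open>Frenet frame at a fixed time\<close>

locale regular_curve_at =
  fixes \<gamma> :: "real \<times> real \<Rightarrow> real^3" and t :: real
  assumes smooth: "\<And>n. Cn_on n UNIV (\<lambda>v. \<gamma> (t, v))"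
    and regular: "\<And>v. Du \<gamma> (t, v) \<noteq> 0"
begin

abbreviation "x1 \<equiv> \<lambda>v. Du \<gamma> (t, v)"
abbreviation "x2 \<equiv> \<lambda>v. Du (Du \<gamma>) (t, v)"
abbreviation "g \<equiv> \<lambda>v. speed \<gamma> (t, v)"
abbreviation "T \<equiv> \<lambda>v. tangent \<gamma> (t, v)"
abbreviation "k \<equiv> \<lambda>v. curvature \<gamma> (t, v)"
abbreviation "N \<equiv> \<lambda>v. pnormal \<gamma> (t, v)"
abbreviation "B \<equiv> \<lambda>v. binormal \<gamma> (t, v)"
abbreviation "tau \<equiv> \<lambda>v. torsion \<gamma> (t, v)"

definition ds :: "(real \<Rightarrow> 'a::real_normed_vector) \<Rightarrow> real \<Rightarrow> 'a" where
  "ds f v = (1 / g v) *\<^sub>R vderiv f v"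

definition curved :: "real set" where
  "curved = {v. 0 < k v}"

lemma Ds_eq_ds: "Ds \<gamma> f (t, v) = ds (\<lambda>w. f (t, w)) v"
  by (simp add: Ds_def ds_def Du_eq_vderiv)

lemma Ds_fun_eq_ds: "(\<lambda>v. Ds \<gamma> f (t, v)) = ds (\<lambda>w. f (t, w))"
  by (simp add: Ds_eq_ds fun_eq_iff)

lemma vderiv_x1: "vderiv x1 = x2"
  by (simp add: Du_eq_vderiv fun_eq_iff)

lemma x1_Cn_on: "Cn_on n UNIV x1"
  using smooth[of "Suc n"] by (simp add: Du_eq_vderiv[abs_def])

lemma x1_differentiable: "x1 differentiable at v"
  using x1_Cn_on[of 1] by simp

lemma g_eq: "g v = norm (x1 v)"
  by (simp add: speed_def)

lemma g_pos: "0 < g v"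
  using regular by (simp add: g_eq)

lemma g_nonzero: "g v \<noteq> 0"
  using g_pos[of v] by simp

lemma g_Cn_on: "Cn_on n UNIV g"
  unfolding g_eq by (rule Cn_on_norm[OF open_UNIV x1_Cn_on]) (simp add: regular)

lemma g_differentiable: "g differentiable at v"
  using g_Cn_on[of 1] by simp

lemma vderiv_g: "vderiv g v = (x1 v \<bullet> x2 v) / g v"
proof -
  have "vderiv (\<lambda>v. g v * g v) v = 2 * g v * vderiv g v"
    using vderiv_bilinear[OF bounded_bilinear_mult g_differentiable g_differentiable] by simp
  moreover have "(\<lambda>v. g v * g v) = (\<lambda>v. x1 v \<bullet> x1 v)"
    by (simp add: g_eq fun_eq_iff dot_square_norm power2_eq_square)
  then have "vderiv (\<lambda>v. g v * g v) v = 2 * (x1 v \<bullet> x2 v)"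
    using vderiv_bilinear[OF bounded_bilinear_inner x1_differentiable x1_differentiable, of v]
    by (simp add: vderiv_x1 inner_commute)
  ultimately show ?thesis
    using g_pos[of v] by (simp add: field_simps)
qed

lemma ds_eq_inverse: "ds f = (\<lambda>v. inverse (g v) *\<^sub>R vderiv f v)"
  by (simp add: ds_def fun_eq_iff divide_inverse)

lemma Cn_on_ds:
  assumes "open S" "Cn_on (Suc n) S f"
  shows "Cn_on n S (ds f)"
proof -
  have "Cn_on n S (\<lambda>v. inverse (g v))"
    by (rule Cn_on_subset[OF subset_UNIV Cn_on_inverse[OF open_UNIV g_Cn_on]]) (simp add: g_nonzero)
  then show ?thesis
    unfolding ds_eq_inverse using assms by (intro Cn_on_scaleR) auto
qed

lemma ds_cong_open: "open S \<Longrightarrow> (\<And>w. w \<in> S \<Longrightarrow> f w = h w) \<Longrightarrow> v \<in> S \<Longrightarrow> ds f v = ds h v"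
  unfolding ds_def by (metis vderiv_cong_open)

lemma ds_bilinear:
  assumes "bounded_bilinear bb" "f differentiable at v" "h differentiable at v"
  shows "ds (\<lambda>v. bb (f v) (h v)) v = bb (f v) (ds h v) + bb (ds f v) (h v)"
  using vderiv_bilinear[OF assms]
  by (simp add: ds_def bounded_bilinear.scaleR_left[OF assms(1)]
      bounded_bilinear.scaleR_right[OF assms(1)] scaleR_add_right)

lemmas ds_mult = ds_bilinear[OF bounded_bilinear_mult]
lemmas ds_inner = ds_bilinear[OF bounded_bilinear_inner]

lemma ds_add: "f differentiable at v \<Longrightarrow> h differentiable at v \<Longrightarrow> ds (\<lambda>v. f v + h v) v = ds f v + ds h v"
  by (simp add: ds_def scaleR_add_right vderiv_eqI[OF has_vector_derivative_add[OF vderiv_works vderiv_works]])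

lemma ds_sin: "(f::real \<Rightarrow> real) differentiable at v \<Longrightarrow> ds (\<lambda>v. sin (f v)) v = cos (f v) * ds f v"
  unfolding ds_def by (subst vderiv_real_eqI) (auto intro!: derivative_eq_intros vderiv_real_works)

lemma ds_cos: "(f::real \<Rightarrow> real) differentiable at v \<Longrightarrow> ds (\<lambda>v. cos (f v)) v = - sin (f v) * ds f v"
  unfolding ds_def by (subst vderiv_real_eqI) (auto intro!: derivative_eq_intros vderiv_real_works)

lemma ds_inner_orthogonality:
  assumes "open S" "v \<in> S" "f differentiable at v" "h differentiable at v"
    and "\<And>w. w \<in> S \<Longrightarrow> f w \<bullet> h w = c"
  shows "ds f v \<bullet> h v + f v \<bullet> ds h v = 0"
proof -
  have "ds (\<lambda>w. f w \<bullet> h w) v = ds (\<lambda>w. c) v"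
    by (rule ds_cong_open[OF assms(1) _ assms(2)]) (use assms(5) in simp)
  also have "\<dots> = 0" by (simp add: ds_def vderiv_eqI)
  finally show ?thesis
    using ds_inner[OF assms(3,4)] by simp
qed

lemma ds_ds:
  assumes "f differentiable at v" "vderiv f differentiable at v"
  shows "ds (ds f) v
    = (vderiv (vderiv f) v - ((x1 v \<bullet> x2 v) / (x1 v \<bullet> x1 v)) *\<^sub>R vderiv f v) /\<^sub>R (x1 v \<bullet> x1 v)"
proof -
  have inv_g: "vderiv (\<lambda>v. 1 / g v) v = - (x1 v \<bullet> x2 v) / g v ^ 3"
    by (rule vderiv_real_eqI)
       (use g_differentiable g_nonzero[of v] in \<open>auto intro!: derivative_eq_intros vderiv_real_works
          simp: vderiv_g power2_eq_square power3_eq_cube field_simps\<close>)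
  have "vderiv (ds f) v = (1 / g v) *\<^sub>R vderiv (vderiv f) v + vderiv (\<lambda>v. 1 / g v) v *\<^sub>R vderiv f v"
    unfolding ds_def[abs_def]
    by (rule vderiv_bilinear[OF bounded_bilinear_scaleR])
       (use assms g_differentiable g_nonzero in \<open>auto intro!: differentiable_divide\<close>)
  then have "ds (ds f) v
      = (1 / (g v)\<^sup>2) *\<^sub>R vderiv (vderiv f) v - ((x1 v \<bullet> x2 v) / g v ^ 4) *\<^sub>R vderiv f v"
    by (simp add: ds_def inv_g scaleR_add_right scaleR_diff_right power2_eq_square power4_eq_xxxx power3_eq_cube)
  moreover have "x1 v \<bullet> x1 v = (g v)\<^sup>2"
    by (simp add: g_eq dot_square_norm)
  ultimately show ?thesis
    using g_nonzero[of v] by (simp add: scaleR_diff_right power2_eq_square power4_eq_xxxx field_simps)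
qed

lemma T_eq_ds: "T = ds (\<lambda>v. \<gamma> (t, v))"
  by (simp add: tangent_def Ds_fun_eq_ds[symmetric])

lemma T_eq: "T v = (1 / g v) *\<^sub>R x1 v"
  by (simp add: tangent_def Ds_def)

lemma ds_T_eq_curvature_vector: "ds T v = curvature_vector (x1 v) (x2 v)"
proof -
  have "vderiv (\<lambda>v. \<gamma> (t, v)) = x1" by (simp add: Du_eq_vderiv fun_eq_iff)
  then show ?thesis
    unfolding T_eq_ds
    by (subst ds_ds) (simp_all add: x1_differentiable smooth_strip_Cn_on vderiv_x1 curvature_vector_def,
        use smooth[of 1] in simp)
qed

lemma T_Cn_on: "Cn_on n UNIV T"
  unfolding T_eq_ds by (rule Cn_on_ds[OF open_UNIV smooth])

lemma T_differentiable: "T differentiable at v"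
  using T_Cn_on[of 1] by simp

lemma inner_T_T: "T v \<bullet> T v = 1"
  using regular[of v] by (simp add: T_eq g_eq dot_square_norm power2_eq_square)

lemma inner_T_ds_T: "T v \<bullet> ds T v = 0"
  unfolding ds_T_eq_curvature_vector T_eq[of v] by (simp add: inner_curvature_vector)

lemma k_eq: "k v = norm (ds T v)"
  by (simp add: curvature_def Ds_eq_ds)

lemma k_scaleR_N: "k v *\<^sub>R N v = ds T v"
  by (cases "k v = 0") (simp_all add: pnormal_def k_eq Ds_eq_ds)

lemma ds_T_Cn_on: "Cn_on n UNIV (ds T)"
  by (rule Cn_on_ds[OF open_UNIV T_Cn_on])

lemma open_curved: "open curved"
proof -
  have "continuous_on UNIV (ds T)"
    using ds_T_Cn_on[of 1]
    by (auto intro!: differentiable_imp_continuous_on simp: differentiable_on_def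
        intro: differentiable_at_withinI)
  then have "continuous_on UNIV k"
    unfolding k_eq[abs_def] by (rule continuous_on_norm)
  then show ?thesis
    unfolding curved_def by (rule open_Collect_less[OF continuous_on_const])
qed

lemma k_Cn_on: "Cn_on n curved k"
  unfolding k_eq[abs_def]
  by (rule Cn_on_norm[OF open_curved Cn_on_subset[OF subset_UNIV ds_T_Cn_on]])
     (simp add: curved_def k_eq)

lemma N_Cn_on: "Cn_on n curved N"
proof -
  have "Cn_on n curved (\<lambda>v. inverse (k v) *\<^sub>R ds T v)"
    by (intro Cn_on_scaleR[OF open_curved] Cn_on_inverse[OF open_curved] k_Cn_on
        Cn_on_subset[OF subset_UNIV ds_T_Cn_on]) (simp add: curved_def)
  then show ?thesis
    by (rule Cn_on_cong[OF open_curved, rotated]) (simp add: pnormal_def Ds_eq_ds divide_inverse)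
qed

lemma B_Cn_on: "Cn_on n curved B"
  unfolding binormal_def
  by (intro Cn_on_cross3[OF open_curved] N_Cn_on Cn_on_subset[OF subset_UNIV[of curved] T_Cn_on])

lemma tau_eq: "tau v = ds N v \<bullet> B v"
  by (simp add: torsion_def Ds_eq_ds)

lemma tau_Cn_on: "Cn_on n curved tau"
  unfolding tau_eq[abs_def]
  by (intro Cn_on_inner[OF open_curved] Cn_on_ds[OF open_curved] N_Cn_on B_Cn_on)

lemma frame_orthonormal:
  assumes "v \<in> curved"
  shows "N v \<bullet> N v = 1" "T v \<bullet> N v = 0" "N v \<bullet> T v = 0"
    and "B v \<bullet> B v = 1" "B v \<bullet> T v = 0" "B v \<bullet> N v = 0" "T v \<bullet> B v = 0" "N v \<bullet> B v = 0"
proof -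
  have k: "k v \<noteq> 0" using assms by (simp add: curved_def)
  show NN: "N v \<bullet> N v = 1"
    using k by (simp add: pnormal_def Ds_eq_ds k_eq dot_square_norm power2_eq_square)
  show TN: "T v \<bullet> N v = 0" "N v \<bullet> T v = 0"
    using inner_T_ds_T[of v] by (simp_all add: pnormal_def Ds_eq_ds inner_commute)
  show "B v \<bullet> B v = 1"
    using NN TN inner_T_T[of v] by (simp add: binormal_def dot_cross)
  show "B v \<bullet> T v = 0" "B v \<bullet> N v = 0" "T v \<bullet> B v = 0" "N v \<bullet> B v = 0"
    by (simp_all add: binormal_def dot_cross_self inner_commute)
qed

text \<open>Frenet relations, obtained by differentiating the orthonormality relations of the frame.\<close>

lemma
  assumes "v \<in> curved"
  shows inner_N_ds_N: "N v \<bullet> ds N v = 0"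
    and inner_B_ds_N: "B v \<bullet> ds N v = tau v"
    and inner_N_ds_B: "N v \<bullet> ds B v = - tau v"
    and inner_B_ds_B: "B v \<bullet> ds B v = 0"
    and ds_B: "ds B v = - tau v *\<^sub>R N v"
proof -
  have dN: "N differentiable at v" and dB: "B differentiable at v"
    using N_Cn_on[of 1] B_Cn_on[of 1] assms by auto
  note orth = ds_inner_orthogonality[OF open_curved assms]
  have "ds N v \<bullet> N v + N v \<bullet> ds N v = 0"
    by (rule orth[OF dN dN, of 1]) (simp add: frame_orthonormal)
  then show "N v \<bullet> ds N v = 0" by (simp add: inner_commute)
  show "B v \<bullet> ds N v = tau v" by (simp add: tau_eq inner_commute)
  have "ds N v \<bullet> B v + N v \<bullet> ds B v = 0"
    by (rule orth[OF dN dB, of 0]) (simp add: frame_orthonormal)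
  then show NdB: "N v \<bullet> ds B v = - tau v" by (simp add: tau_eq)
  have "ds B v \<bullet> B v + B v \<bullet> ds B v = 0"
    by (rule orth[OF dB dB, of 1]) (simp add: frame_orthonormal)
  then show BdB: "B v \<bullet> ds B v = 0" by (simp add: inner_commute)
  have "ds T v \<bullet> B v + T v \<bullet> ds B v = 0"
    by (rule orth[OF T_differentiable dB, of 0]) (simp add: frame_orthonormal)
  then have TdB: "T v \<bullet> ds B v = 0"
    using frame_orthonormal[OF assms] by (simp add: k_scaleR_N[symmetric])
  have "ds B v = (ds B v \<bullet> T v) *\<^sub>R T v + (ds B v \<bullet> N v) *\<^sub>R N v + (ds B v \<bullet> B v) *\<^sub>R B v"
    using orthonormal_cross3_expansion[of "T v" "N v" "ds B v"] frame_orthonormal[OF assms] inner_T_T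
    by (simp add: binormal_def)
  then show "ds B v = - tau v *\<^sub>R N v"
    using TdB NdB BdB by (simp add: inner_commute)
qed

end

section \<open>Framed curves\<close>

locale framed_curve_at = regular_curve_at +
  fixes \<theta> :: "real \<times> real \<Rightarrow> real"
  assumes theta_C2: "Cn_on 2 UNIV (\<lambda>v. \<theta> (t, v))"
begin

abbreviation "th \<equiv> \<lambda>v. \<theta> (t, v)"
abbreviation "p1 \<equiv> \<lambda>v. psi1 \<gamma> \<theta> (t, v)"
abbreviation "p2 \<equiv> \<lambda>v. psi2 \<gamma> \<theta> (t, v)"
abbreviation "p3 \<equiv> \<lambda>v. psi3 \<gamma> \<theta> (t, v)"
abbreviation "V \<equiv> \<lambda>v. curvature \<gamma> (t, v) *\<^sub>R theta_normal \<gamma> \<theta> (t, v)"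
abbreviation "beta \<equiv> \<lambda>v. theta_binormal \<gamma> \<theta> (t, v)"

lemma p1_eq: "p1 = (\<lambda>v. k v * cos (th v))"
  by (simp add: psi1_def fun_eq_iff)

lemma p2_eq: "p2 = (\<lambda>v. k v * sin (th v))"
  by (simp add: psi2_def fun_eq_iff)

lemma p3_eq: "p3 = (\<lambda>v. tau v + ds th v)"
  by (simp add: psi3_def Ds_eq_ds fun_eq_iff)

lemma V_eq: "V = (\<lambda>v. p1 v *\<^sub>R N v + p2 v *\<^sub>R B v)"
  by (simp add: theta_normal_def psi1_def psi2_def scaleR_add_right fun_eq_iff)

lemma sin_cos_th_C2: "Cn_on 2 curved (\<lambda>v. sin (th v))" "Cn_on 2 curved (\<lambda>v. cos (th v))"
  using Cn_on_sin_cos[OF open_curved Cn_on_subset[OF subset_UNIV theta_C2]] by auto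

lemma p1_C2: "Cn_on 2 curved p1" and p2_C2: "Cn_on 2 curved p2"
  unfolding p1_eq p2_eq by (intro Cn_on_mult[OF open_curved] k_Cn_on sin_cos_th_C2)+

lemma V_C2: "Cn_on 2 curved V"
  unfolding V_eq
  by (intro Cn_on_add[OF open_curved] Cn_on_scaleR[OF open_curved] p1_C2 p2_C2 N_Cn_on B_Cn_on)

lemma
  assumes "v \<in> curved"
  shows th_differentiable: "th differentiable at v"
    and ds_th_differentiable: "ds th differentiable at v"
    and k_differentiable: "k differentiable at v"
    and ds_k_differentiable: "ds k differentiable at v"
    and tau_differentiable: "tau differentiable at v"
    and N_differentiable: "N differentiable at v"
    and B_differentiable: "B differentiable at v"
    and p1_differentiable: "p1 differentiable at v"
    and p2_differentiable: "p2 differentiable at v"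
    and ds_p2_differentiable: "ds p2 differentiable at v"
    and ds_V_differentiable: "ds V differentiable at v"
  using assms Cn_on_ds[OF open_UNIV theta_C2[unfolded numeral_2_eq_2]] theta_C2 k_Cn_on[of 2]
    Cn_on_ds[OF open_curved k_Cn_on, of 1] tau_Cn_on[of 1] N_Cn_on[of 1] B_Cn_on[of 1] p1_C2 p2_C2
    Cn_on_ds[OF open_curved p2_C2[unfolded numeral_2_eq_2]] V_C2
    Cn_on_ds[OF open_curved V_C2[unfolded numeral_2_eq_2]]
  by (simp_all add: numeral_2_eq_2)

lemma
  assumes "v \<in> curved"
  shows ds_p1: "ds p1 v = ds k v * cos (th v) - k v * sin (th v) * ds th v"
    and ds_p2: "ds p2 v = ds k v * sin (th v) + k v * cos (th v) * ds th v"
proof -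
  have sin: "(\<lambda>v. sin (th v)) differentiable at v" and cos: "(\<lambda>v. cos (th v)) differentiable at v"
    using sin_cos_th_C2 assms by (simp_all add: numeral_2_eq_2)
  show "ds p1 v = ds k v * cos (th v) - k v * sin (th v) * ds th v"
    unfolding p1_eq ds_mult[OF k_differentiable[OF assms] cos]
    by (simp add: ds_cos th_differentiable assms)
  show "ds p2 v = ds k v * sin (th v) + k v * cos (th v) * ds th v"
    unfolding p2_eq ds_mult[OF k_differentiable[OF assms] sin]
    by (simp add: ds_sin th_differentiable assms)
qed

lemma
  assumes "v \<in> curved"
  shows inner_N_ds_V: "N v \<bullet> ds V v = ds p1 v - p2 v * tau v"
    and inner_B_ds_V: "B v \<bullet> ds V v = p1 v * tau v + ds p2 v"
proof -
  have "ds V v = (p1 v *\<^sub>R ds N v + ds p1 v *\<^sub>R N v) + (p2 v *\<^sub>R ds B v + ds p2 v *\<^sub>R B v)"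
    unfolding V_eq
    using assms p1_differentiable p2_differentiable N_differentiable B_differentiable
    by (simp add: ds_add ds_bilinear[OF bounded_bilinear_scaleR] differentiable_scaleR)
  then show "N v \<bullet> ds V v = ds p1 v - p2 v * tau v" "B v \<bullet> ds V v = p1 v * tau v + ds p2 v"
    using assms frame_orthonormal[OF assms] inner_N_ds_N inner_B_ds_N inner_N_ds_B inner_B_ds_B
    by (simp_all add: inner_add_right)
qed

lemma inner_beta_ds_V:
  assumes "v \<in> curved"
  shows "beta v \<bullet> ds V v = k v * p3 v"
proof -
  have "beta v \<bullet> ds V v = - sin (th v) * (N v \<bullet> ds V v) + cos (th v) * (B v \<bullet> ds V v)"
    by (simp add: theta_binormal_def inner_add_left inner_diff_left)
  also have "\<dots> = k v * (tau v + ds th v)"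
    using sin_cos_squared_add3[of "th v"]
    unfolding inner_N_ds_V[OF assms] inner_B_ds_V[OF assms] ds_p1[OF assms] ds_p2[OF assms]
    unfolding psi1_def psi2_def by algebra
  finally show ?thesis by (simp add: psi3_def Ds_eq_ds)
qed

lemma ds_ds_p2:
  assumes "v \<in> curved"
  shows "ds (ds p2) v = ds (ds k) v * sin (th v) + 2 * ds k v * cos (th v) * ds th v
    - k v * sin (th v) * (ds th v)\<^sup>2 + k v * cos (th v) * ds (ds th) v"
proof -
  have sin: "(\<lambda>v. sin (th v)) differentiable at v" and cos: "(\<lambda>v. cos (th v)) differentiable at v"
    using sin_cos_th_C2 assms by (simp_all add: numeral_2_eq_2)
  have kcos: "(\<lambda>v. k v * cos (th v)) differentiable at v"
    using p1_differentiable[OF assms] by (simp add: p1_eq)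
  note d = ds_th_differentiable[OF assms] ds_k_differentiable[OF assms] k_differentiable[OF assms]
  have "ds (ds p2) v = ds (\<lambda>v. ds k v * sin (th v) + (k v * cos (th v)) * ds th v) v"
    by (rule ds_cong_open[OF open_curved _ assms]) (simp add: ds_p2)
  also have "\<dots> = ds k v * ds (\<lambda>v. sin (th v)) v + ds (ds k) v * sin (th v)
      + ((k v * cos (th v)) * ds (ds th) v + ds p1 v * ds th v)"
    using d sin kcos by (simp add: ds_add ds_mult p1_eq)
  finally show ?thesis
    using assms by (simp add: ds_p1 ds_sin th_differentiable power2_eq_square algebra_simps)
qed

lemma inner_B_ds_ds_V:
  assumes "v \<in> curved"
  shows "B v \<bullet> ds (ds V) v = (k v * ds p3 v + 2 * ds k v * p3 v) * cos (th v)
    + (ds (ds k) v - k v * (p3 v)\<^sup>2) * sin (th v)"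
proof -
  have "ds (\<lambda>w. B w \<bullet> ds V w) v = B v \<bullet> ds (ds V) v + ds B v \<bullet> ds V v"
    by (rule ds_inner[OF B_differentiable[OF assms] ds_V_differentiable[OF assms]])
  moreover have "ds (\<lambda>w. B w \<bullet> ds V w) v = ds (\<lambda>w. p1 w * tau w + ds p2 w) v"
    by (rule ds_cong_open[OF open_curved _ assms]) (simp add: inner_B_ds_V)
  moreover have "ds (\<lambda>w. p1 w * tau w + ds p2 w) v = p1 v * ds tau v + ds p1 v * tau v + ds (ds p2) v"
    using assms by (simp add: ds_add ds_mult p1_differentiable tau_differentiable ds_p2_differentiable
        differentiable_mult)
  moreover have "ds p3 v = ds tau v + ds (ds th) v"
    unfolding p3_eq using assms by (simp add: ds_add tau_differentiable ds_th_differentiable)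
  ultimately show ?thesis
    using inner_N_ds_V[OF assms]
    unfolding ds_B[OF assms] ds_p1[OF assms] ds_ds_p2[OF assms]
    unfolding psi1_def psi2_def psi3_def Ds_eq_ds
    by (simp add: algebra_simps power2_eq_square)
qed

lemma x1_eq: "x1 v = g v *\<^sub>R T v"
  by (simp add: T_eq g_nonzero)

lemma inner_x1_x1: "x1 v \<bullet> x1 v = (g v)\<^sup>2"
  by (simp add: g_eq dot_square_norm)

lemma
  assumes "v \<in> curved"
  shows inner_x1_V: "x1 v \<bullet> V v = 0"
    and inner_V_V: "V v \<bullet> V v = (k v)\<^sup>2"
    and inner_x2_beta: "x2 v \<bullet> beta v = - ((g v)\<^sup>2 * p2 v)"
    and inner_vderiv_V_beta: "vderiv V v \<bullet> beta v = g v * k v * p3 v"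
proof -
  note frame = frame_orthonormal[OF assms]
  show "x1 v \<bullet> V v = 0"
    using frame by (simp add: x1_eq theta_normal_def inner_add_right)
  have "theta_normal \<gamma> \<theta> (t, v) \<bullet> theta_normal \<gamma> \<theta> (t, v) = (cos (th v))\<^sup>2 + (sin (th v))\<^sup>2"
    using frame by (simp add: theta_normal_def inner_add_left inner_add_right power2_eq_square)
  then show "V v \<bullet> V v = (k v)\<^sup>2"
    by (simp add: power2_eq_square)
  have beta: "T v \<bullet> beta v = 0" "N v \<bullet> beta v = - sin (th v)"
    using frame by (simp_all add: theta_binormal_def inner_add_right inner_diff_right)
  obtain c where "x2 v = (x1 v \<bullet> x1 v) *\<^sub>R (k v *\<^sub>R N v) + c *\<^sub>R x1 v"
    using acceleration_decomposition[OF regular[of v], of "x2 v"]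
    by (simp add: k_scaleR_N ds_T_eq_curvature_vector)
  then show "x2 v \<bullet> beta v = - ((g v)\<^sup>2 * p2 v)"
    using beta by (simp add: inner_add_left x1_eq inner_T_T psi2_def power2_eq_square)
  have "vderiv V v = g v *\<^sub>R ds V v"
    by (simp add: ds_def g_nonzero)
  then show "vderiv V v \<bullet> beta v = g v * k v * p3 v"
    using inner_beta_ds_V[OF assms] by (simp add: inner_commute)
qed

end

section \<open>The framed flow\<close>

locale framed_flow =
  fixes tb :: ereal and \<gamma> :: "real \<times> real \<Rightarrow> real^3" and \<theta> \<upsilon> :: "real \<times> real \<Rightarrow> real"
  assumes smooth: "smooth_strip (time_dom tb) \<gamma>"
    and regular: "\<forall>t'\<in>time_dom tb. \<forall>u'. Du \<gamma> (t', u') \<noteq> 0"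
    and theta_reg: "C12_strip (time_dom tb) \<theta>"
    and flow: "framed_curvature_flow tb \<gamma> \<theta> \<upsilon>"
begin

abbreviation "D \<equiv> time_dom tb"

lemma framed_curve_at: "t \<in> D \<Longrightarrow> framed_curve_at \<gamma> t \<theta>"
  by unfold_locales (use smooth_strip_Cn_on[OF smooth] regular C12_strip_Cn_on[OF theta_reg] in auto)

lemma Dt_gamma: "t \<in> D \<Longrightarrow> Dt D \<gamma> (t, v) = curvature \<gamma> (t, v) *\<^sub>R theta_normal \<gamma> \<theta> (t, v)"
  using flow by (simp add: framed_curvature_flow_def)

lemma has_Dt_theta:
  assumes "t \<in> D"
  shows "((\<lambda>s. \<theta> (s, u)) has_real_derivative \<upsilon> (t, u)) (at t within D)"
proof -
  have "(\<lambda>s. \<theta> (s, u)) differentiable (at t within D)"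
    using theta_reg assms by (simp add: C12_strip_def)
  then have "((\<lambda>s. \<theta> (s, u)) has_vector_derivative Dt D \<theta> (t, u)) (at t within D)"
    by (simp add: Dt_def vector_derivative_works[symmetric])
  then show ?thesis
    using flow assms
    by (simp add: framed_curvature_flow_def has_real_derivative_iff_has_vector_derivative)
qed

text \<open>The curvature vector is expressed through the first two u-derivatives of the curve, so
  that it can be differentiated in time.\<close>

lemma Dt_gamma_rotation:
  fixes s u :: real
  assumes "s \<in> D"
  defines "W \<equiv> curvature_vector (Du \<gamma> (s, u)) (Du (Du \<gamma>) (s, u))"
  shows "Dt D \<gamma> (s, u) = cos (\<theta> (s, u)) *\<^sub>R W + sin (\<theta> (s, u)) *\<^sub>R cross3 (tangent \<gamma> (s, u)) W"
proof -
  interpret C: framed_curve_at \<gamma> s \<theta> by (rule framed_curve_at[OF assms(1)])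
  have "W = C.k u *\<^sub>R C.N u" by (simp add: W_def C.ds_T_eq_curvature_vector C.k_scaleR_N)
  then show ?thesis
    by (simp add: Dt_gamma[OF assms(1)] theta_normal_def binormal_def scaleR_add_right cross_mult_right mult.commute)
qed

lemma curved_iff: "t \<in> D \<Longrightarrow> u \<in> regular_curve_at.curved \<gamma> t \<longleftrightarrow> curvature \<gamma> (t, u) \<noteq> 0"
  by (simp add: regular_curve_at.curved_def[OF framed_curve_at.axioms(1)[OF framed_curve_at]]
      curvature_def)

text \<open>Up to tangential and normal terms the curvature vector is linear in the first two
  u-derivatives of the curve, whose time derivatives are the u-derivatives of the velocity;
  hence the time derivative of the curvature vector has the binormal component of the second
  arclength derivative of the velocity.\<close>

lemma has_Dt_curvature_vector:
  assumes t: "t \<in> D" and k: "curvature \<gamma> (t, u) \<noteq> 0"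
  obtains W' where
    "((\<lambda>s. curvature_vector (Du \<gamma> (s, u)) (Du (Du \<gamma>) (s, u))) has_vector_derivative W') (at t within D)"
    "binormal \<gamma> (t, u) \<bullet> W' = binormal \<gamma> (t, u) \<bullet> Ds \<gamma> (Ds \<gamma> (Dt D \<gamma>)) (t, u)"
proof -
  interpret C: framed_curve_at \<gamma> t \<theta> by (rule framed_curve_at[OF t])
  have u: "u \<in> C.curved" using curved_iff[OF t] k by simp
  define f where "f w = Dt D \<gamma> (t, w)" for w
  have f: "f differentiable at u" "vderiv f differentiable at u"
    using smooth_strip_Cn_on[OF smooth_strip_Dt[OF smooth] t, of 2] by (simp_all add: f_def[abs_def] numeral_2_eq_2)
  have vderiv_f: "vderiv f u = Du (Dt D \<gamma>) (t, u)" "vderiv (vderiv f) u = Du (Du (Dt D \<gamma>)) (t, u)"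
    by (simp_all add: f_def[abs_def] Du_eq_vderiv fun_eq_iff)
  obtain W' where hW: "((\<lambda>s. curvature_vector (Du \<gamma> (s, u)) (Du (Du \<gamma>) (s, u))) has_vector_derivative W')
      (at t within D)"
    and W': "\<And>b. b \<bullet> C.x1 u = 0 \<Longrightarrow> b \<bullet> C.x2 u = 0 \<Longrightarrow>
      b \<bullet> W' = b \<bullet> ((Du (Du (Dt D \<gamma>)) (t, u) - ((C.x1 u \<bullet> C.x2 u) / (C.x1 u \<bullet> C.x1 u)) *\<^sub>R Du (Dt D \<gamma>) (t, u))
        /\<^sub>R (C.x1 u \<bullet> C.x1 u))"
    by (rule has_vector_derivative_curvature_vector[OF smooth_strip_has_Dt_Du[OF smooth t, of u]
        smooth_strip_has_Dt_Du_Du[OF smooth t, of u] C.regular[of u]]) blast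
  have "C.B u \<bullet> C.x1 u = 0"
    using C.frame_orthonormal[OF u] by (simp add: C.x1_eq)
  moreover have "C.B u \<bullet> C.x2 u = 0"
  proof -
    obtain c where "C.x2 u = (C.x1 u \<bullet> C.x1 u) *\<^sub>R (C.k u *\<^sub>R C.N u) + c *\<^sub>R C.x1 u"
      using acceleration_decomposition[OF C.regular[of u], of "C.x2 u"]
      by (simp add: C.k_scaleR_N C.ds_T_eq_curvature_vector)
    then show ?thesis
      using C.frame_orthonormal[OF u] by (simp add: inner_add_right C.x1_eq)
  qed
  ultimately have "C.B u \<bullet> W' = C.B u \<bullet> C.ds (C.ds f) u"
    using W' by (simp add: C.ds_ds[OF f] vderiv_f)
  also have "C.ds (C.ds f) u = Ds \<gamma> (Ds \<gamma> (Dt D \<gamma>)) (t, u)"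
    by (simp add: C.Ds_eq_ds C.Ds_fun_eq_ds f_def[abs_def])
  finally show ?thesis by (rule that[OF hW])
qed

lemma tangent_differentiable_within:
  assumes t: "t \<in> D"
  shows "(\<lambda>s. tangent \<gamma> (s, u)) differentiable (at t within D)"
proof -
  define X where "X s = Du \<gamma> (s, u)" for s
  have "X differentiable (at t within D)"
    using smooth_strip_has_Dt_Du[OF smooth t] unfolding X_def[abs_def] by (rule differentiableI_vector)
  moreover from this have "(\<lambda>s. norm (X s)) differentiable (at t within D)"
    using differentiable_chain_within[of X t D norm] regular t
    by (simp add: X_def o_def differentiable_at_withinI)
  moreover have "(\<lambda>s. tangent \<gamma> (s, u)) = (\<lambda>s. inverse (norm (X s)) *\<^sub>R X s)"
    by (simp add: X_def tangent_def Ds_def speed_def divide_inverse fun_eq_iff)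
  ultimately show ?thesis
    using regular t by (auto simp: X_def[abs_def] intro!: differentiable_scaleR differentiable_inverse)
qed

lemma Dt_Dt_inner_theta_binormal:
  assumes t: "t \<in> D" and k: "curvature \<gamma> (t, u) \<noteq> 0"
  shows "Dt D (Dt D \<gamma>) (t, u) \<bullet> theta_binormal \<gamma> \<theta> (t, u)
    = curvature \<gamma> (t, u) * \<upsilon> (t, u) + binormal \<gamma> (t, u) \<bullet> Ds \<gamma> (Ds \<gamma> (Dt D \<gamma>)) (t, u)"
proof -
  interpret C: framed_curve_at \<gamma> t \<theta> by (rule framed_curve_at[OF t])
  have u: "u \<in> C.curved" using curved_iff[OF t] k by simp
  define X where "X s = Du \<gamma> (s, u)" for s
  define W where "W s = curvature_vector (X s) (Du (Du \<gamma>) (s, u))" for s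
  define T where "T s = tangent \<gamma> (s, u)" for s
  define P where "P s = cross3 (T s) (W s)" for s
  obtain W' where hW: "(W has_vector_derivative W') (at t within D)"
    and BW': "C.B u \<bullet> W' = C.B u \<bullet> Ds \<gamma> (Ds \<gamma> (Dt D \<gamma>)) (t, u)"
    using has_Dt_curvature_vector[OF t k] unfolding W_def[abs_def] X_def by blast
  have X_nonzero: "s \<in> D \<Longrightarrow> X s \<noteq> 0" for s
    using regular by (simp add: X_def)
  have T_eq: "T s = inverse (norm (X s)) *\<^sub>R X s" for s
    by (simp add: T_def X_def tangent_def Ds_def speed_def divide_inverse)
  obtain T' where hT: "(T has_vector_derivative T') (at t within D)"
    using tangent_differentiable_within[OF t] unfolding T_def[abs_def] by (metis vector_derivative_works)
  have hP: "(P has_vector_derivative cross3 (T t) W' + cross3 T' (W t)) (at t within D)"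
    unfolding P_def[abs_def] by (rule bounded_bilinear.has_vector_derivative[OF bounded_bilinear_cross3 hT hW])
  have unit: "T s \<bullet> T s = 1" "T s \<bullet> W s = 0" if "s \<in> D" for s
    using X_nonzero[OF that]
    by (simp_all add: T_eq W_def inner_curvature_vector dot_square_norm power2_eq_square)
  obtain V' where hV: "((\<lambda>s. cos (\<theta> (s, u)) *\<^sub>R W s + sin (\<theta> (s, u)) *\<^sub>R P s) has_vector_derivative V')
      (at t within D)"
    and V': "V' \<bullet> (- sin (\<theta> (t, u)) *\<^sub>R W t + cos (\<theta> (t, u)) *\<^sub>R P t) = \<upsilon> (t, u) * (W t \<bullet> W t) + P t \<bullet> W'"
    by (rule has_vector_derivative_rotation[OF has_Dt_theta[OF t] hW hP _ _ t at_within_time_dom_nontrivial[OF t]])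
       (simp_all add: P_def dot_cross_self inner_cross3_unit_orthogonal unit)
  have "((\<lambda>s. Dt D \<gamma> (s, u)) has_vector_derivative V') (at t within D)"
    by (rule has_vector_derivative_transform_within[OF hV, where d=1])
       (simp_all add: t Dt_gamma_rotation W_def X_def T_def P_def)
  then have "Dt D (Dt D \<gamma>) (t, u) = V'"
    by (rule Dt_eqI[OF _ t])
  moreover have Wt: "W t = C.k u *\<^sub>R C.N u"
    by (simp add: W_def X_def C.ds_T_eq_curvature_vector C.k_scaleR_N)
  moreover have "P t = C.k u *\<^sub>R C.B u"
    by (simp add: P_def T_def Wt binormal_def cross_mult_right)
  ultimately have "C.k u * (Dt D (Dt D \<gamma>) (t, u) \<bullet> C.beta u) = C.k u * (C.k u * \<upsilon> (t, u) + C.B u \<bullet> W')"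
    using V' C.frame_orthonormal[OF u]
    by (simp add: theta_binormal_def inner_add_right inner_diff_right algebra_simps)
  then show ?thesis
    using k BW' by simp
qed

lemma fund1_eq:
  assumes t: "t \<in> D" and k: "curvature \<gamma> (t, u) \<noteq> 0"
  shows "fund1 D \<gamma> (t, u) = vector [vector [(speed \<gamma> (t, u))\<^sup>2, 0], vector [0, (curvature \<gamma> (t, u))\<^sup>2]]"
proof -
  interpret C: framed_curve_at \<gamma> t \<theta> by (rule framed_curve_at[OF t])
  have u: "u \<in> C.curved" using curved_iff[OF t] k by simp
  show ?thesis
    using k C.inner_x1_x1[of u] C.inner_x1_V[OF u] C.inner_V_V[OF u]
    by (simp add: fund1_def Let_def Dt_gamma[OF t] inner_commute)
qed

lemma fund2_eq:
  assumes t: "t \<in> D" and k: "curvature \<gamma> (t, u) \<noteq> 0"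
  defines "\<kappa> \<equiv> curvature \<gamma>" and "p3 \<equiv> psi3 \<gamma> \<theta>"
  shows "fund2 D \<gamma> \<theta> (t, u) = vector [
      vector [- ((speed \<gamma> (t, u))\<^sup>2 * psi2 \<gamma> \<theta> (t, u)), speed \<gamma> (t, u) * \<kappa> (t, u) * p3 (t, u)],
      vector [speed \<gamma> (t, u) * \<kappa> (t, u) * p3 (t, u),
        \<kappa> (t, u) * \<upsilon> (t, u) + (\<kappa> (t, u) * Ds \<gamma> p3 (t, u) + 2 * Ds \<gamma> \<kappa> (t, u) * p3 (t, u)) * cos (\<theta> (t, u))
          + (Ds \<gamma> (Ds \<gamma> \<kappa>) (t, u) - \<kappa> (t, u) * (p3 (t, u))\<^sup>2) * sin (\<theta> (t, u))]]"
proof -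
  interpret C: framed_curve_at \<gamma> t \<theta> by (rule framed_curve_at[OF t])
  have u: "u \<in> C.curved" using curved_iff[OF t] k by simp
  have V: "(\<lambda>w. Dt D \<gamma> (t, w)) = C.V"
    by (simp add: Dt_gamma[OF t] fun_eq_iff)
  have mixed: "Dt D (Du \<gamma>) (t, u) = vderiv C.V u" "Du (Dt D \<gamma>) (t, u) = vderiv C.V u"
    by (simp_all add: smooth_strip_Dt_Du_commute[OF smooth t] Du_eq_vderiv V)
  have "Ds \<gamma> (Ds \<gamma> (Dt D \<gamma>)) (t, u) = C.ds (C.ds C.V) u"
    by (simp add: C.Ds_eq_ds C.Ds_fun_eq_ds V)
  then have "Dt D (Dt D \<gamma>) (t, u) \<bullet> C.beta u = \<kappa> (t, u) * \<upsilon> (t, u) + C.B u \<bullet> C.ds (C.ds C.V) u"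
    using Dt_Dt_inner_theta_binormal[OF t k] by (simp add: \<kappa>_def)
  then show ?thesis
    using C.inner_x2_beta[OF u] C.inner_vderiv_V_beta[OF u] C.inner_B_ds_ds_V[OF u]
    by (simp add: fund2_def mixed \<kappa>_def p3_def C.Ds_eq_ds C.Ds_fun_eq_ds add.assoc)
qed

end

theorem mainTheorem1:
  fixes tb :: ereal
    and \<gamma> :: "real \<times> real \<Rightarrow> real^3"
    and \<theta> \<upsilon> :: "real \<times> real \<Rightarrow> real"
    and t u :: real
  assumes smooth: "smooth_strip (time_dom tb) \<gamma>"
    and regular: "\<forall>t'\<in>time_dom tb. \<forall>u'. Du \<gamma> (t', u') \<noteq> 0"
    and periodic: "\<forall>t'\<in>time_dom tb. \<forall>u'. \<gamma> (t', u' + 2 * pi) = \<gamma> (t', u')"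
    and theta_reg: "C12_strip (time_dom tb) \<theta>"
    and theta_circle: "\<forall>t'\<in>time_dom tb. \<forall>u'. \<exists>k::int. \<theta> (t', u' + 2 * pi) = \<theta> (t', u') + 2 * pi * of_int k"
    and upsilon_C1: "C1_strip (time_dom tb) \<upsilon>"
    and flow: "framed_curvature_flow tb \<gamma> \<theta> \<upsilon>"
    and t_in: "t \<in> time_dom tb"
    and kpos: "curvature \<gamma> (t, u) > 0"
  shows "(let \<kappa> = curvature \<gamma>; p1 = psi1 \<gamma> \<theta>; p2 = psi2 \<gamma> \<theta>; p3 = psi3 \<gamma> \<theta>;
             p = (t, u);
             chi = \<upsilon> p / \<kappa> p
                 + (\<kappa> p * Ds \<gamma> p3 p + 2 * Ds \<gamma> \<kappa> p * p3 p) / \<kappa> p ^ 3 * p1 p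
                 + (Ds \<gamma> (Ds \<gamma> \<kappa>) p - \<kappa> p * p3 p ^ 2) / \<kappa> p ^ 3 * p2 p
         in mean_curv (time_dom tb) \<gamma> \<theta> p = - (p2 p) + chi \<and>
            gauss_curv (time_dom tb) \<gamma> \<theta> p = - (p3 p ^ 2) - p2 p * chi)"
proof -
  interpret framed_flow tb \<gamma> \<theta> \<upsilon>
    using smooth regular theta_reg flow by unfold_locales
  have k: "curvature \<gamma> (t, u) \<noteq> 0" using kpos by simp
  have g: "speed \<gamma> (t, u) \<noteq> 0" using regular t_in by (simp add: speed_def)
  show ?thesis
    unfolding Let_def mean_curv_def gauss_curv_def fund1_eq[OF t_in k] fund2_eq[OF t_in k]
      trace_mult_matrix_inv_diagonal_2[OF power_not_zero[OF g] power_not_zero[OF k]]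
      det_divide_det_diagonal_2[OF power_not_zero[OF g] power_not_zero[OF k]]
    using g k by (simp add: psi1_def psi2_def field_simps power2_eq_square power3_eq_cube)
qed

end
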